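(* For every positive integer $n$, the sets $\mathcal{L}_n$ and $\mathcal{M}_n$ have least elements, and $\min \mathcal{L}_n = \min \mathcal{M}_n$.
   Context: For an irrational real $\xi$ and positive integer $n$, $\lambda_n(\xi) = \limsup_{s/t \to \xi} \dfrac{\gcd(t,n)}{t^2 \left| \frac{s}{t} - \xi\right|}$ (limsup over rationals $s/t$, $t>0$, tending to $\xi$), and $\mathcal{L}_n = \{\lambda_n(\xi)\in\mathbb{R} : \xi\in\mathbb{R}\setminus\mathbb{Q}\}$. For reals $\xi\ne\xi'$, $\mu_n(\xi,\xi') = \sup_{(s,t)\in\mathbb{Z}^2\setminus\{0\}} \dfrac{\gcd(t,n)\,|\xi-\xi'|}{|s-t\xi|\,|s-t\xi'|}$ (with $\gcd(0,n)=n$), and $\mathcal{M}_n$ is the set of finite values of $\mu_n(\xi,\xi')$ over pairs of reals $\xi\neq\xi'$. *)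

theory Defs
  imports "HOL-Analysis.Analysis"
begin

text \<open>Quantity whose limsup defines lambda_n: gcd(t,n) / (t^2 |s/t - xi|), valued in ereal
  (infinite if s/t = xi, which never happens for irrational xi).\<close>
definition lam_term :: "nat \<Rightarrow> real \<Rightarrow> int \<Rightarrow> int \<Rightarrow> ereal" where
  "lam_term n \<xi> s t =
     (if of_int s / of_int t = \<xi> then \<infinity>
      else ereal (of_int (gcd t (int n)) / ((of_int t)\<^sup>2 * \<bar>of_int s / of_int t - \<xi>\<bar>)))"

text \<open>lambda_n(xi) = limsup over rationals s/t (t > 0) tending to xi, written as
  inf over eps > 0 of the sup over all s/t with t > 0 and |s/t - xi| < eps.\<close>
definition lambda_n :: "nat \<Rightarrow> real \<Rightarrow> ereal" where
  "lambda_n n \<xi> =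
     (INF \<epsilon>\<in>{0<..}. SUP p\<in>{(s, t). t > 0 \<and> \<bar>of_int s / of_int t - \<xi>\<bar> < \<epsilon>}.
        lam_term n \<xi> (fst p) (snd p))"

definition L_set :: "nat \<Rightarrow> real set" where
  "L_set n = {x. \<exists>\<xi>. \<xi> \<notin> \<rat> \<and> lambda_n n \<xi> = ereal x}"

text \<open>Term of mu_n: gcd(t,n) |xi - xi'| / (|s - t xi| |s - t xi'|), infinite when the
  denominator vanishes.  Note gcd 0 n = n in Isabelle.\<close>
definition mu_term :: "nat \<Rightarrow> real \<Rightarrow> real \<Rightarrow> int \<Rightarrow> int \<Rightarrow> ereal" where
  "mu_term n \<xi> \<xi>' s t =
     (let d = \<bar>of_int s - of_int t * \<xi>\<bar> * \<bar>of_int s - of_int t * \<xi>'\<bar> in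
      if d = 0 then \<infinity>
      else ereal (of_int (gcd t (int n)) * \<bar>\<xi> - \<xi>'\<bar> / d))"

definition mu_n :: "nat \<Rightarrow> real \<Rightarrow> real \<Rightarrow> ereal" where
  "mu_n n \<xi> \<xi>' = (SUP p\<in>(UNIV - {(0, 0)}). mu_term n \<xi> \<xi>' (fst p) (snd p))"

definition M_set :: "nat \<Rightarrow> real set" where
  "M_set n = {x. \<exists>\<xi> \<xi>'. \<xi> \<noteq> \<xi>' \<and> mu_n n \<xi> \<xi>' = ereal x}"

end

theory Submission
  imports Defs
begin

text \<open>Both \<open>lambda_n\<close> and \<open>mu_n\<close> are built from one quantity attached to two real linear
  forms \<open>as + bt\<close>, \<open>cs + dt\<close> and integer weights \<open>(p, q)\<close>, namely
  \<open>gcd(ps + qt, n) |ad - bc| / |(as + bt)(cs + dt)|\<close>.  It is invariant under unimodular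
  substitutions of \<open>(s, t)\<close>, which also act on the weights, and under rescaling either form.
  \<open>mu_n(\<xi>, \<xi>')\<close> is its supremum for the forms \<open>s - t\<xi>\<close>, \<open>s - t\<xi>'\<close> with weights
  \<open>(0, 1)\<close>, \<open>lam_term\<close> is its value for \<open>s - t\<xi>\<close> and \<open>t\<close>, and every pair of forms with
  coprime weights is equivalent to a pair of the first kind.

  By Dirichlet's approximation theorem and Lagrange--Gauss reduction, forms whose supremum is at
  most \<open>C\<close> are equivalent to forms with coefficients bounded in terms of \<open>C\<close>; compactness
  (the weights only matter modulo \<open>n\<close>) then shows that the infimum \<open>m\<close> of \<open>M_n\<close> is
  attained.  The same reduction, applied to the forms \<open>Ns - N\<xi>t\<close> and \<open>t/N\<close> for
  \<open>N \<rightarrow> \<infinity>\<close>, turns \<open>lambda_n(\<xi>) = L\<close> into a pair with \<open>mu_n \<le> L\<close>, so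
  \<open>m \<le> inf L_n\<close>.  Finally \<open>lambda_n(\<xi>) \<le> mu_n(\<xi>, \<xi>')\<close> for every \<open>\<xi>' \<noteq> \<xi>\<close>, so for
  the extremal pair \<open>lambda_n(\<xi>) = m\<close> and \<open>m \<in> L_n\<close>.\<close>

section \<open>Weighted products of two linear forms\<close>

definition form_term :: "nat \<Rightarrow> real \<Rightarrow> real \<Rightarrow> real \<Rightarrow> real \<Rightarrow> int \<Rightarrow> int \<Rightarrow> int \<Rightarrow> int \<Rightarrow> ereal" where
  "form_term n a b c d p q s t =
     (let x = a * of_int s + b * of_int t; y = c * of_int s + d * of_int t in
      if x * y = 0 then \<infinity>
      else ereal (of_int (gcd (p * s + q * t) (int n)) * \<bar>a * d - b * c\<bar> / \<bar>x * y\<bar>))"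

definition form_bounded :: "nat \<Rightarrow> real \<Rightarrow> real \<Rightarrow> real \<Rightarrow> real \<Rightarrow> int \<Rightarrow> int \<Rightarrow> real \<Rightarrow> bool" where
  "form_bounded n a b c d p q C \<longleftrightarrow>
     (\<forall>s t. (s, t) \<noteq> (0, 0) \<longrightarrow> form_term n a b c d p q s t \<le> ereal C)"

lemma form_term_nonneg: "form_term n a b c d p q s t \<ge> 0"
  unfolding form_term_def Let_def by auto

lemma det_unimodular_transform:
  fixes a b c d :: real and h11 h12 h21 h22 :: int
  shows "(a * of_int h11 + b * of_int h21) * (c * of_int h12 + d * of_int h22) -
         (a * of_int h12 + b * of_int h22) * (c * of_int h11 + d * of_int h21)
       = (a * d - b * c) * of_int (h11 * h22 - h12 * h21)"
  by (simp add: algebra_simps)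

lemma form_term_unimodular:
  assumes "h11 * h22 - h12 * h21 = (1::int)"
  shows "form_term n (a * of_int h11 + b * of_int h21) (a * of_int h12 + b * of_int h22)
           (c * of_int h11 + d * of_int h21) (c * of_int h12 + d * of_int h22)
           (p * h11 + q * h21) (p * h12 + q * h22) s t
       = form_term n a b c d p q (h11 * s + h12 * t) (h21 * s + h22 * t)"
proof -
  have
    "(a * of_int h11 + b * of_int h21) * of_int s + (a * of_int h12 + b * of_int h22) * of_int t
       = a * of_int (h11 * s + h12 * t) + b * of_int (h21 * s + h22 * t)"
    "(c * of_int h11 + d * of_int h21) * of_int s + (c * of_int h12 + d * of_int h22) * of_int t
       = c * of_int (h11 * s + h12 * t) + d * of_int (h21 * s + h22 * t)"
    "(p * h11 + q * h21) * s + (p * h12 + q * h22) * t = p * (h11 * s + h12 * t) + q * (h21 * s + h22 * t)"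
    by (simp_all add: algebra_simps)
  with assms show ?thesis
    unfolding form_term_def Let_def det_unimodular_transform by simp
qed

lemma unimodular_image_nonzero:
  assumes "h11 * h22 - h12 * h21 = (1::int)" "(s, t) \<noteq> (0, 0)"
  shows "(h11 * s + h12 * t, h21 * s + h22 * t) \<noteq> (0, 0)"
proof
  assume "(h11 * s + h12 * t, h21 * s + h22 * t) = (0, 0)"
  then have "h22 * (h11 * s + h12 * t) - h12 * (h21 * s + h22 * t) = 0"
    and "h11 * (h21 * s + h22 * t) - h21 * (h11 * s + h12 * t) = 0" by auto
  then have "(h11 * h22 - h12 * h21) * s = 0" and "(h11 * h22 - h12 * h21) * t = 0"
    by (simp_all add: algebra_simps)
  with assms show False by simp
qed

lemma unimodular_imp_coprime:
  fixes h11 h12 h21 h22 :: int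
  assumes "h11 * h22 - h12 * h21 = 1"
  shows "coprime h21 h22"
proof (rule coprimeI)
  fix c assume "c dvd h21" "c dvd h22"
  then have "c dvd h11 * h22 - h12 * h21" by simp
  with assms show "is_unit c" by simp
qed

lemma form_bounded_unimodular:
  assumes "h11 * h22 - h12 * h21 = (1::int)" and "form_bounded n a b c d p q C"
  shows "form_bounded n (a * of_int h11 + b * of_int h21) (a * of_int h12 + b * of_int h22)
           (c * of_int h11 + d * of_int h21) (c * of_int h12 + d * of_int h22)
           (p * h11 + q * h21) (p * h12 + q * h22) C"
  using assms unimodular_image_nonzero[OF assms(1)]
  unfolding form_bounded_def form_term_unimodular[OF assms(1)] by blast

lemma form_term_scale:
  assumes "l \<noteq> 0" "m \<noteq> 0"
  shows "form_term n (l * a) (l * b) (m * c) (m * d) p q s t = form_term n a b c d p q s t"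
proof -
  have "l * a * (m * d) - l * b * (m * c) = (l * m) * (a * d - b * c)"
    and "(l * a * of_int s + l * b * of_int t) * (m * c * of_int s + m * d * of_int t)
       = (l * m) * ((a * of_int s + b * of_int t) * (c * of_int s + d * of_int t))"
    by (simp_all add: algebra_simps)
  with assms show ?thesis
    unfolding form_term_def Let_def by (simp add: abs_mult)
qed

lemma form_term_uminus: "form_term n a b c d p q (- s) (- t) = form_term n a b c d p q s t"
proof -
  have "gcd (p * - s + q * - t) (int n) = gcd (p * s + q * t) (int n)"
    by (metis gcd_neg1_int minus_add_distrib mult_minus_right)
  then show ?thesis
    unfolding form_term_def Let_def by (simp add: algebra_simps)
qed

lemma form_value_lower_bound:
  assumes "form_term n a b c d p q s t \<le> ereal C" "n > 0" "\<bar>a * d - b * c\<bar> = 1"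
  shows "(a * of_int s + b * of_int t) * (c * of_int s + d * of_int t) \<noteq> 0"
    and "1 \<le> C * \<bar>(a * of_int s + b * of_int t) * (c * of_int s + d * of_int t)\<bar>"
proof -
  define z where "z = (a * of_int s + b * of_int t) * (c * of_int s + d * of_int t)"
  define g where "g = real_of_int (gcd (p * s + q * t) (int n))"
  have "gcd (p * s + q * t) (int n) \<ge> 1"
    using \<open>n > 0\<close> by (simp add: int_one_le_iff_zero_less)
  then have "g \<ge> 1" unfolding g_def by linarith
  from assms(1,3) have z: "z \<noteq> 0" and "g / \<bar>z\<bar> \<le> C"
    unfolding form_term_def Let_def z_def[symmetric] g_def[symmetric] by (auto split: if_splits)
  then have "g \<le> C * \<bar>z\<bar>" by (simp add: divide_le_eq)
  with \<open>g \<ge> 1\<close> z show "z \<noteq> 0" "1 \<le> C * \<bar>z\<bar>" by simp_all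
qed

lemma mu_term_eq_form_term: "mu_term n \<xi> \<xi>' s t = form_term n 1 (- \<xi>) 1 (- \<xi>') 0 1 s t"
proof -
  have "1 * of_int s + - x * of_int t = of_int s - of_int t * x" for x :: real
    by simp
  moreover have "\<bar>\<xi> - \<xi>'\<bar> = \<bar>1 * - \<xi>' - - \<xi> * 1\<bar>" by simp
  ultimately show ?thesis
    unfolding mu_term_def form_term_def Let_def by (simp add: abs_mult mult.commute)
qed

lemma mu_n_le_iff:
  "mu_n n \<xi> \<xi>' \<le> ereal C \<longleftrightarrow> (\<forall>s t. (s, t) \<noteq> (0, 0) \<longrightarrow> mu_term n \<xi> \<xi>' s t \<le> ereal C)"
  unfolding mu_n_def SUP_le_iff by (auto simp: Ball_def)

lemma mu_n_le_iff_form_bounded: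
  "mu_n n \<xi> \<xi>' \<le> ereal C \<longleftrightarrow> form_bounded n 1 (- \<xi>) 1 (- \<xi>') 0 1 C"
  unfolding mu_n_le_iff form_bounded_def mu_term_eq_form_term ..

lemma mu_term_le_mu_n: "(s, t) \<noteq> (0, 0) \<Longrightarrow> mu_term n \<xi> \<xi>' s t \<le> mu_n n \<xi> \<xi>'"
  unfolding mu_n_def by (rule SUP_upper2[of "(s, t)"]) auto

lemma mu_term_nonneg: "mu_term n \<xi> \<xi>' s t \<ge> 0"
  by (simp add: mu_term_eq_form_term form_term_nonneg)

lemma mu_n_nonneg: "mu_n n \<xi> \<xi>' \<ge> 0"
  using mu_term_le_mu_n[of 1 0 n \<xi> \<xi>'] mu_term_nonneg[of n \<xi> \<xi>' 1 0] by simp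

lemma lam_term_eq_form_term:
  assumes "t > 0"
  shows "lam_term n \<xi> s t = form_term n 1 (- \<xi>) 0 1 0 1 s t"
proof -
  define x where "x = of_int s - \<xi> * of_int t"
  from assms have t: "real_of_int t > 0" by simp
  then have "of_int s / of_int t - \<xi> = x / of_int t"
    unfolding x_def by (simp add: field_simps)
  with t have "(of_int s / of_int t = \<xi>) \<longleftrightarrow> x * of_int t = 0"
    and "(of_int t)\<^sup>2 * \<bar>of_int s / of_int t - \<xi>\<bar> = \<bar>x * of_int t\<bar>"
    by (auto simp: abs_mult power2_eq_square abs_div)
  moreover have "1 * of_int s + - \<xi> * of_int t = x" unfolding x_def by simp
  ultimately show ?thesis
    unfolding lam_term_def form_term_def Let_def by simp
qed

lemma form_term_lambda_scale:
  assumes "N \<noteq> 0"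
  shows "form_term n N (- (N * \<xi>)) 0 (1 / N) p q s t = form_term n 1 (- \<xi>) 0 1 p q s t"
  using form_term_scale[of N "1 / N" n 1 "- \<xi>" 0 1 p q s t] assms by simp

text \<open>A unimodular substitution moves the coprime weights to \<open>(0, 1)\<close>; rescaling then
  normalises the two forms to \<open>s - t\<xi>\<close> and \<open>s - t\<xi>'\<close>.\<close>

lemma form_bounded_imp_mu_n_le:
  assumes "coprime p q" "a * d - b * c \<noteq> 0" "form_bounded n a b c d p q C"
  obtains \<xi> \<xi>' where "\<xi> \<noteq> \<xi>'" "mu_n n \<xi> \<xi>' \<le> ereal C"
proof -
  obtain u v where "u * p + v * q = 1"
    using bezout_int[of p q] \<open>coprime p q\<close> by auto
  then have H: "q * v - u * (- p) = 1" by (simp add: algebra_simps)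
  define a' where "a' = a * of_int q + b * of_int (- p)"
  define b' where "b' = a * of_int u + b * of_int v"
  define c' where "c' = c * of_int q + d * of_int (- p)"
  define d' where "d' = c * of_int u + d * of_int v"
  have "form_bounded n a' b' c' d' (p * q + q * (- p)) (p * u + q * v) C"
    unfolding a'_def b'_def c'_def d'_def by (rule form_bounded_unimodular[OF H assms(3)])
  moreover have "p * q + q * (- p) = 0" "p * u + q * v = 1"
    using \<open>u * p + v * q = 1\<close> by (simp_all add: algebra_simps)
  ultimately have bounded: "form_bounded n a' b' c' d' 0 1 C" by simp
  have det: "a' * d' - b' * c' \<noteq> 0"
    using H assms(2) det_unimodular_transform[of a q b "- p" c u d v]
    unfolding a'_def b'_def c'_def d'_def by simp
  from bounded have "form_term n a' b' c' d' 0 1 1 0 \<le> ereal C"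
    unfolding form_bounded_def by simp
  then have "a' \<noteq> 0" "c' \<noteq> 0"
    unfolding form_term_def Let_def by (auto split: if_splits)
  have "form_term n 1 (- (- b' / a')) 1 (- (- d' / c')) 0 1 s t = form_term n a' b' c' d' 0 1 s t"
    for s t
    using form_term_scale[of "1 / a'" "1 / c'" n a' b' c' d' 0 1 s t] \<open>a' \<noteq> 0\<close> \<open>c' \<noteq> 0\<close> by simp
  with bounded have "mu_n n (- b' / a') (- d' / c') \<le> ereal C"
    unfolding mu_n_le_iff_form_bounded form_bounded_def by simp
  moreover have "- b' / a' \<noteq> - d' / c'"
    using det \<open>a' \<noteq> 0\<close> \<open>c' \<noteq> 0\<close> by (auto simp: field_simps)
  ultimately show thesis by (rule that[rotated])
qed

section \<open>Reduction of forms\<close>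

lemma exists_size_reduction:
  fixes U1 U2 W1 W2 :: real
  assumes "U1\<^sup>2 + U2\<^sup>2 > 0"
  obtains k :: int
  where "\<bar>U1 * (W1 + of_int k * U1) + U2 * (W2 + of_int k * U2)\<bar> \<le> (U1\<^sup>2 + U2\<^sup>2) / 2"
proof -
  define N where "N = U1\<^sup>2 + U2\<^sup>2"
  define z where "z = (U1 * W1 + U2 * W2) / N"
  define k where "k = \<lfloor>1 / 2 - z\<rfloor>"
  have "of_int k \<le> 1 / 2 - z" "1 / 2 - z < of_int k + 1"
    unfolding k_def by linarith+
  then have "\<bar>z + of_int k\<bar> \<le> 1 / 2" by linarith
  moreover have "N * z = U1 * W1 + U2 * W2"
    using assms unfolding z_def N_def by simp
  then have "U1 * (W1 + of_int k * U1) + U2 * (W2 + of_int k * U2) = N * (z + of_int k)"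
    unfolding N_def by (simp add: algebra_simps power2_eq_square)
  moreover have "N > 0" using assms unfolding N_def .
  ultimately show thesis
    by (intro that[of k]) (simp add: abs_mult N_def[symmetric] mult_left_mono[of _ "1 / 2" N, simplified])
qed

lemma sum_squares_le_of_reduced_pair:
  fixes U1 U2 V1 V2 :: real
  assumes cross: "\<bar>U1 * V2 - U2 * V1\<bar> = 1"
    and dot: "\<bar>U1 * V1 + U2 * V2\<bar> \<le> (U1\<^sup>2 + U2\<^sup>2) / 2"
  shows "V1\<^sup>2 + V2\<^sup>2 \<le> (U1\<^sup>2 + U2\<^sup>2) / 4 + 1 / (U1\<^sup>2 + U2\<^sup>2)"
proof -
  define N where "N = U1\<^sup>2 + U2\<^sup>2"
  have Lagrange: "N * (V1\<^sup>2 + V2\<^sup>2) = (U1 * V1 + U2 * V2)\<^sup>2 + (U1 * V2 - U2 * V1)\<^sup>2"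
    unfolding N_def by (simp add: algebra_simps power2_eq_square)
  have "(U1 * V1 + U2 * V2)\<^sup>2 \<le> (N / 2)\<^sup>2"
    using dot unfolding N_def by (metis abs_ge_zero power2_abs power_mono)
  moreover have "(U1 * V2 - U2 * V1)\<^sup>2 = 1"
    using cross by (metis power2_abs power_one)
  ultimately have "N * (V1\<^sup>2 + V2\<^sup>2) \<le> N\<^sup>2 / 4 + 1"
    unfolding Lagrange by (simp add: power_divide)
  moreover have "N \<noteq> 0"
    using cross unfolding N_def by auto
  then have "N > 0"
    unfolding N_def by (simp add: sum_power2_gt_zero_iff)
  ultimately show ?thesis
    unfolding N_def[symmetric] by (simp add: field_simps power2_eq_square)
qed

text \<open>One step of Lagrange--Gauss reduction.\<close>

lemma exists_short_unimodular_basis: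
  fixes a b c d :: real and h k :: int
  assumes det: "\<bar>a * d - b * c\<bar> = 1" and "coprime h k" and "r > 0"
    and lower: "r \<le> (a * of_int h + b * of_int k)\<^sup>2 + (c * of_int h + d * of_int k)\<^sup>2"
    and upper: "(a * of_int h + b * of_int k)\<^sup>2 + (c * of_int h + d * of_int k)\<^sup>2 \<le> R"
  obtains h11 h12 h21 h22 :: int where "h11 * h22 - h12 * h21 = 1"
    "(a * of_int h11 + b * of_int h21)\<^sup>2 + (c * of_int h11 + d * of_int h21)\<^sup>2 \<le> R + 1 / r"
    "(a * of_int h12 + b * of_int h22)\<^sup>2 + (c * of_int h12 + d * of_int h22)\<^sup>2 \<le> R + 1 / r"
proof -
  obtain x y where "x * h + y * k = 1"
    using bezout_int[of h k] \<open>coprime h k\<close> by auto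
  define U1 where "U1 = a * of_int h + b * of_int k"
  define U2 where "U2 = c * of_int h + d * of_int k"
  define N where "N = U1\<^sup>2 + U2\<^sup>2"
  have N: "r \<le> N" "N \<le> R"
    using lower upper unfolding N_def U1_def U2_def by auto
  obtain m where m: "\<bar>U1 * (a * of_int (- y) + b * of_int x + of_int m * U1) +
      U2 * (c * of_int (- y) + d * of_int x + of_int m * U2)\<bar> \<le> N / 2"
    using exists_size_reduction[of U1 U2] N \<open>r > 0\<close> unfolding N_def by auto
  define v1 where "v1 = - y + m * h"
  define v2 where "v2 = x + m * k"
  define V1 where "V1 = a * of_int v1 + b * of_int v2"
  define V2 where "V2 = c * of_int v1 + d * of_int v2"
  have basis: "h * v2 - v1 * k = 1"
    using \<open>x * h + y * k = 1\<close> unfolding v1_def v2_def by (simp add: algebra_simps)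
  have "U1 * V2 - U2 * V1 = (a * d - b * c) * of_int (h * v2 - v1 * k)"
    unfolding U1_def U2_def V1_def V2_def by (simp add: algebra_simps)
  with det basis have "\<bar>U1 * V2 - U2 * V1\<bar> = 1" by simp
  moreover have "\<bar>U1 * V1 + U2 * V2\<bar> \<le> N / 2"
    using m unfolding V1_def V2_def v1_def v2_def U1_def U2_def by (simp add: algebra_simps)
  ultimately have "V1\<^sup>2 + V2\<^sup>2 \<le> N / 4 + 1 / N"
    using sum_squares_le_of_reduced_pair unfolding N_def by blast
  also have "\<dots> \<le> R + 1 / r"
  proof -
    have "N \<ge> 0" "1 / N \<le> 1 / r" using N \<open>r > 0\<close> by (simp_all add: N_def frac_le)
    with N show ?thesis by linarith
  qed
  finally have "V1\<^sup>2 + V2\<^sup>2 \<le> R + 1 / r" .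
  moreover have "U1\<^sup>2 + U2\<^sup>2 \<le> R + 1 / r"
    using N \<open>r > 0\<close> unfolding N_def by (smt (verit) divide_pos_pos)
  ultimately show thesis
    using basis unfolding U1_def U2_def V1_def V2_def by (intro that[of h v2 v1 k]) auto
qed

lemma abs_le_sqrt_of_sum_squares_le:
  fixes x y :: real
  assumes "x\<^sup>2 + y\<^sup>2 \<le> R"
  shows "\<bar>x\<bar> \<le> sqrt R" "\<bar>y\<bar> \<le> sqrt R"
proof -
  have "x\<^sup>2 \<le> R" "y\<^sup>2 \<le> R"
    using assms zero_le_power2[of x] zero_le_power2[of y] by linarith+
  then show "\<bar>x\<bar> \<le> sqrt R" "\<bar>y\<bar> \<le> sqrt R"
    by (simp_all add: real_le_rsqrt)
qed

text \<open>With \<open>a = N\<close> and \<open>b = -N\<xi>\<close>, a Dirichlet approximation \<open>h/k\<close> of \<open>\<xi>\<close> makes both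
  forms small at \<open>(h, k)\<close>.\<close>

lemma exists_dirichlet_point:
  fixes N :: nat and a b c d \<xi> :: real
  assumes N: "N > 0" "a = real N" and b: "b = - (a * \<xi>)" and det: "a * d - b * c = 1"
    and c: "\<bar>c\<bar> \<le> a"
  obtains h k :: int where "coprime h k" "0 < k" "\<bar>of_int h - of_int k * \<xi>\<bar> < 1 / a"
    "(a * of_int h + b * of_int k)\<^sup>2 + (c * of_int h + d * of_int k)\<^sup>2 \<le> 5"
proof -
  obtain h k where hk: "coprime h k" "0 < k" "k \<le> int N" and
    close: "\<bar>of_int k * \<xi> - of_int h\<bar> < 1 / N"
    using Dirichlet_approx_coprime[OF N(1)] by blast
  have a: "a > 0" using N by simp
  define x where "x = a * of_int h + b * of_int k"
  define y where "y = c * of_int h + d * of_int k"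
  have x: "x = a * (of_int h - of_int k * \<xi>)"
    unfolding x_def b by (simp add: algebra_simps)
  have d: "d = 1 / a - c * \<xi>"
    using det a unfolding b by (simp add: field_simps)
  have y: "y = c * (of_int h - of_int k * \<xi>) + of_int k / a"
    using a unfolding y_def d by (simp add: field_simps)
  have close': "\<bar>of_int h - of_int k * \<xi>\<bar> < 1 / a"
    using close N by (simp add: abs_minus_commute)
  have "\<bar>x\<bar> = a * \<bar>of_int h - of_int k * \<xi>\<bar>"
    unfolding x using a by (simp add: abs_mult)
  also have "\<dots> < a * (1 / a)"
    using close' a by (rule mult_strict_left_mono)
  finally have "\<bar>x\<bar> < 1" using a by simp
  have "\<bar>c\<bar> * \<bar>of_int h - of_int k * \<xi>\<bar> \<le> a * (1 / a)"
    using c close' by (intro mult_mono) auto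
  then have "\<bar>c * (of_int h - of_int k * \<xi>)\<bar> \<le> 1"
    using a by (simp add: abs_mult)
  moreover have "of_int k / a \<le> 1" "0 < of_int k / a"
    using hk N by simp_all
  ultimately have "\<bar>y\<bar> \<le> 2" unfolding y by linarith
  have "x\<^sup>2 \<le> 1" using \<open>\<bar>x\<bar> < 1\<close> by (simp add: abs_square_le_1)
  moreover have "y\<^sup>2 \<le> 2\<^sup>2" using \<open>\<bar>y\<bar> \<le> 2\<close> by (metis abs_ge_zero power2_abs power_mono)
  ultimately have "x\<^sup>2 + y\<^sup>2 \<le> 5" by simp
  then show thesis
    using hk(1,2) close' that unfolding x_def y_def by blast
qed

lemma exists_reduced_basis:
  fixes N :: nat and a b c d \<xi> r :: real
  assumes N: "N > 0" "a = real N" and b: "b = - (a * \<xi>)" and det: "a * d - b * c = 1"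
    and c: "\<bar>c\<bar> \<le> a" and "r > 0"
    and lower: "\<And>h k. coprime h k \<Longrightarrow> 0 < k \<Longrightarrow> \<bar>of_int h - of_int k * \<xi>\<bar> < 1 / a \<Longrightarrow>
        r \<le> \<bar>(a * of_int h + b * of_int k) * (c * of_int h + d * of_int k)\<bar>"
  obtains h11 h12 h21 h22 :: int where "h11 * h22 - h12 * h21 = 1"
    "\<bar>a * of_int h11 + b * of_int h21\<bar> \<le> sqrt (5 + 1 / (2 * r))"
    "\<bar>a * of_int h12 + b * of_int h22\<bar> \<le> sqrt (5 + 1 / (2 * r))"
    "\<bar>c * of_int h11 + d * of_int h21\<bar> \<le> sqrt (5 + 1 / (2 * r))"
    "\<bar>c * of_int h12 + d * of_int h22\<bar> \<le> sqrt (5 + 1 / (2 * r))"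
proof -
  obtain h k where hk: "coprime h k" "0 < k" "\<bar>of_int h - of_int k * \<xi>\<bar> < 1 / a"
    and hi: "(a * of_int h + b * of_int k)\<^sup>2 + (c * of_int h + d * of_int k)\<^sup>2 \<le> 5"
    using exists_dirichlet_point[OF N b det c] by blast
  define x where "x = a * of_int h + b * of_int k"
  define y where "y = c * of_int h + d * of_int k"
  have "r \<le> \<bar>x * y\<bar>" using lower[OF hk] unfolding x_def y_def .
  moreover have "2 * \<bar>x * y\<bar> \<le> x\<^sup>2 + y\<^sup>2"
    using sum_squares_bound[of "\<bar>x\<bar>" "\<bar>y\<bar>"] by (simp add: abs_mult mult.assoc)
  ultimately have lo: "2 * r \<le> x\<^sup>2 + y\<^sup>2" by linarith
  have "\<bar>a * d - b * c\<bar> = 1" "0 < 2 * r" using det \<open>r > 0\<close> by simp_all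
  from exists_short_unimodular_basis[OF this(1) hk(1) this(2) lo[unfolded x_def y_def] hi]
  obtain h11 h12 h21 h22 where "h11 * h22 - h12 * h21 = 1"
    "(a * of_int h11 + b * of_int h21)\<^sup>2 + (c * of_int h11 + d * of_int h21)\<^sup>2 \<le> 5 + 1 / (2 * r)"
    "(a * of_int h12 + b * of_int h22)\<^sup>2 + (c * of_int h12 + d * of_int h22)\<^sup>2 \<le> 5 + 1 / (2 * r)" .
  then show thesis
    using abs_le_sqrt_of_sum_squares_le that by metis
qed

section \<open>Limits of forms\<close>

lemma reciprocal_le_of_limit:
  fixes X :: "nat \<Rightarrow> real"
  assumes "g > 0" "X \<longlonglongrightarrow> x"
    and bound: "\<And>e. e > 0 \<Longrightarrow> eventually (\<lambda>k. X k \<noteq> 0 \<and> g / \<bar>X k\<bar> \<le> L + e) sequentially"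
  shows "x \<noteq> 0" "g / \<bar>x\<bar> \<le> L"
proof -
  have "eventually (\<lambda>k. X k \<noteq> 0 \<and> g / \<bar>X k\<bar> \<le> L + 1) sequentially"
    using bound[of 1] by simp
  then have "eventually (\<lambda>k. 0 < g / (L + 1) \<and> g / (L + 1) \<le> \<bar>X k\<bar>) sequentially"
  proof eventually_elim
    case (elim k)
    with \<open>g > 0\<close> have "L + 1 > 0"
      by (smt (verit) divide_pos_pos zero_less_abs_iff)
    moreover have "g \<le> (L + 1) * \<bar>X k\<bar>"
      using elim by (simp add: divide_le_eq)
    ultimately show ?case
      using \<open>g > 0\<close> by (simp add: pos_divide_le_eq mult.commute)
  qed
  then have "0 < g / (L + 1)" and "g / (L + 1) \<le> \<bar>x\<bar>"
    using tendsto_lowerbound[OF tendsto_rabs[OF \<open>X \<longlonglongrightarrow> x\<close>]]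
    by (auto dest: eventually_happens' simp: eventually_conj_iff)
  then show "x \<noteq> 0" by auto
  then have lim: "(\<lambda>k. g / \<bar>X k\<bar>) \<longlonglongrightarrow> g / \<bar>x\<bar>"
    by (intro tendsto_intros \<open>X \<longlonglongrightarrow> x\<close>) simp
  have "g / \<bar>x\<bar> \<le> L + e" if "e > 0" for e
    using bound[OF that] by (intro tendsto_upperbound[OF lim]) (auto elim: eventually_mono)
  then show "g / \<bar>x\<bar> \<le> L"
    by (rule field_le_epsilon)
qed

lemma form_bounded_of_limit:
  fixes A B C D :: "nat \<Rightarrow> real" and P Q :: "nat \<Rightarrow> int"
  assumes "n > 0" and lim: "A \<longlonglongrightarrow> a" "B \<longlonglongrightarrow> b" "C \<longlonglongrightarrow> c" "D \<longlonglongrightarrow> d"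
    and det: "\<And>k. A k * D k - B k * C k = 1"
    and residues: "\<And>k. P k mod int n = p mod int n \<and> Q k mod int n = q mod int n"
    and bound: "\<And>s t e. (s, t) \<noteq> (0, 0) \<Longrightarrow> e > 0 \<Longrightarrow>
      eventually (\<lambda>k. form_term n (A k) (B k) (C k) (D k) (P k) (Q k) s t \<le> ereal (L + e)) sequentially"
  shows "a * d - b * c = 1" and "form_bounded n a b c d p q L"
proof -
  have "(\<lambda>k. A k * D k - B k * C k) \<longlonglongrightarrow> a * d - b * c"
    by (intro tendsto_intros lim)
  with det show det_lim: "a * d - b * c = 1"
    using LIMSEQ_unique[OF _ tendsto_const] by simp
  show "form_bounded n a b c d p q L"
    unfolding form_bounded_def
  proof (intro allI impI)
    fix s t :: int assume st: "(s, t) \<noteq> (0, 0)"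
    define X where "X k = (A k * of_int s + B k * of_int t) * (C k * of_int s + D k * of_int t)" for k
    define x where "x = (a * of_int s + b * of_int t) * (c * of_int s + d * of_int t)"
    define g where "g = real_of_int (gcd (p * s + q * t) (int n))"
    have "gcd (p * s + q * t) (int n) \<ge> 1"
      using \<open>n > 0\<close> by (simp add: int_one_le_iff_zero_less)
    then have "g > 0" unfolding g_def by linarith
    have "(P k * s + Q k * t) mod int n = (p * s + q * t) mod int n" for k
      using residues[of k] by (metis mod_add_cong mod_mult_cong)
    then have "gcd (P k * s + Q k * t) (int n) = gcd (p * s + q * t) (int n)" for k
      by (metis gcd_red_int)
    then have term_k: "form_term n (A k) (B k) (C k) (D k) (P k) (Q k) s t =
        (if X k = 0 then \<infinity> else ereal (g / \<bar>X k\<bar>))" for k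
      unfolding form_term_def Let_def X_def g_def det by simp
    have "X \<longlonglongrightarrow> x"
      unfolding X_def x_def by (intro tendsto_intros lim)
    moreover have "eventually (\<lambda>k. X k \<noteq> 0 \<and> g / \<bar>X k\<bar> \<le> L + e) sequentially" if "e > 0" for e
      using bound[OF st that] by eventually_elim (simp add: term_k split: if_splits)
    ultimately have "x \<noteq> 0" "g / \<bar>x\<bar> \<le> L"
      using reciprocal_le_of_limit[OF \<open>g > 0\<close>] by blast+
    then show "form_term n a b c d p q s t \<le> ereal L"
      unfolding form_term_def Let_def x_def[symmetric] g_def[symmetric] det_lim by simp
  qed
qed

lemma bounded_forms_convergent_subsequence:
  fixes A B C D :: "nat \<Rightarrow> real" and P Q :: "nat \<Rightarrow> int"
  assumes "n > 0" and entries: "\<And>k. \<bar>A k\<bar> \<le> K \<and> \<bar>B k\<bar> \<le> K \<and> \<bar>C k\<bar> \<le> K \<and> \<bar>D k\<bar> \<le> K"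
  obtains \<sigma> :: "nat \<Rightarrow> nat" and a b c d where "strict_mono \<sigma>"
    "(\<lambda>k. A (\<sigma> k)) \<longlonglongrightarrow> a" "(\<lambda>k. B (\<sigma> k)) \<longlonglongrightarrow> b"
    "(\<lambda>k. C (\<sigma> k)) \<longlonglongrightarrow> c" "(\<lambda>k. D (\<sigma> k)) \<longlonglongrightarrow> d"
    "\<And>k. P (\<sigma> k) mod int n = P (\<sigma> 0) mod int n \<and> Q (\<sigma> k) mod int n = Q (\<sigma> 0) mod int n"
proof -
  define residues where "residues k = (P k mod int n, Q k mod int n)" for k
  have "range residues \<subseteq> {0..<int n} \<times> {0..<int n}"
    using \<open>n > 0\<close> unfolding residues_def by auto
  then have "finite (range residues)"
    by (rule finite_subset) simp
  then obtain \<rho> where "infinite (residues -` {\<rho>})"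
    by (rule inf_img_fin_domE) simp
  then obtain r :: "nat \<Rightarrow> nat" where r: "strict_mono r" "\<And>k. residues (r k) = \<rho>"
    using infinite_enumerate by blast
  define entries_seq where "entries_seq k = ((A (r k), B (r k)), (C (r k), D (r k)))" for k
  have "A k \<in> {-K..K}" "B k \<in> {-K..K}" "C k \<in> {-K..K}" "D k \<in> {-K..K}" for k
    using entries[of k] by (auto simp: abs_le_iff)
  then have "range entries_seq \<subseteq> (({-K..K} \<times> {-K..K}) \<times> ({-K..K} \<times> {-K..K}))"
    unfolding entries_seq_def by auto
  then have "bounded (range entries_seq)"
    by (rule bounded_subset[rotated]) (intro bounded_Times bounded_closed_interval)
  then obtain l r' where "strict_mono r'" and conv: "(entries_seq \<circ> r') \<longlonglongrightarrow> l"
    using bounded_imp_convergent_subsequence by blast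
  obtain a b c d where l: "l = ((a, b), (c, d))" by (metis prod.collapse)
  show thesis
  proof (rule that[of "r \<circ> r'"])
    show "strict_mono (r \<circ> r')"
      using r(1) \<open>strict_mono r'\<close> by (rule strict_mono_o)
    show "(\<lambda>k. A ((r \<circ> r') k)) \<longlonglongrightarrow> a" "(\<lambda>k. B ((r \<circ> r') k)) \<longlonglongrightarrow> b"
      "(\<lambda>k. C ((r \<circ> r') k)) \<longlonglongrightarrow> c" "(\<lambda>k. D ((r \<circ> r') k)) \<longlonglongrightarrow> d"
      using tendsto_fst[OF tendsto_fst[OF conv]] tendsto_snd[OF tendsto_fst[OF conv]]
        tendsto_fst[OF tendsto_snd[OF conv]] tendsto_snd[OF tendsto_snd[OF conv]]
      by (simp_all add: l entries_seq_def o_def)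
    show "P ((r \<circ> r') k) mod int n = P ((r \<circ> r') 0) mod int n \<and>
        Q ((r \<circ> r') k) mod int n = Q ((r \<circ> r') 0) mod int n" for k
      using r(2)[of "r' k"] r(2)[of "r' 0"] unfolding residues_def by (simp add: prod_eq_iff)
  qed
qed

lemma exists_pair_of_bounded_forms:
  fixes A B C D :: "nat \<Rightarrow> real" and P Q :: "nat \<Rightarrow> int"
  assumes "n > 0"
    and det: "\<And>k. A k * D k - B k * C k = 1"
    and entries: "\<And>k. \<bar>A k\<bar> \<le> K \<and> \<bar>B k\<bar> \<le> K \<and> \<bar>C k\<bar> \<le> K \<and> \<bar>D k\<bar> \<le> K"
    and coprime: "\<And>k. coprime (P k) (Q k)"
    and bound: "\<And>s t e. (s, t) \<noteq> (0, 0) \<Longrightarrow> e > 0 \<Longrightarrow>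
      eventually (\<lambda>k. form_term n (A k) (B k) (C k) (D k) (P k) (Q k) s t \<le> ereal (L + e)) sequentially"
  obtains \<xi> \<xi>' where "\<xi> \<noteq> \<xi>'" "mu_n n \<xi> \<xi>' \<le> ereal L"
proof -
  obtain \<sigma> a b c d where "strict_mono \<sigma>" and lim:
    "(\<lambda>k. A (\<sigma> k)) \<longlonglongrightarrow> a" "(\<lambda>k. B (\<sigma> k)) \<longlonglongrightarrow> b"
    "(\<lambda>k. C (\<sigma> k)) \<longlonglongrightarrow> c" "(\<lambda>k. D (\<sigma> k)) \<longlonglongrightarrow> d"
    and residues:
    "\<And>k. P (\<sigma> k) mod int n = P (\<sigma> 0) mod int n \<and> Q (\<sigma> k) mod int n = Q (\<sigma> 0) mod int n"
    by (rule bounded_forms_convergent_subsequence[where A = A and B = B and C = C and D = D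
          and P = P and Q = Q, OF \<open>n > 0\<close> entries]) blast
  have "eventually (\<lambda>k. form_term n (A (\<sigma> k)) (B (\<sigma> k)) (C (\<sigma> k)) (D (\<sigma> k)) (P (\<sigma> k)) (Q (\<sigma> k)) s t
      \<le> ereal (L + e)) sequentially" if "(s, t) \<noteq> (0, 0)" "e > 0" for s t e
    using eventually_compose_filterlim[OF bound[OF that] filterlim_subseq[OF \<open>strict_mono \<sigma>\<close>]] .
  from form_bounded_of_limit[OF \<open>n > 0\<close> lim det residues this]
  have "a * d - b * c = 1" "form_bounded n a b c d (P (\<sigma> 0)) (Q (\<sigma> 0)) L" by simp_all
  with coprime show thesis
    using form_bounded_imp_mu_n_le that by (metis zero_neq_one)
qed

section \<open>Comparison of \<open>lambda_n\<close> and \<open>mu_n\<close>\<close>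

lemma lambda_n_nonneg: "lambda_n n \<xi> \<ge> 0"
  unfolding lambda_n_def
proof (rule INF_greatest)
  fix \<epsilon> :: real assume "\<epsilon> \<in> {0<..}"
  then obtain x where "x \<in> \<rat>" "\<xi> < x" "x < \<xi> + \<epsilon>"
    using Rats_dense_in_real[of \<xi> "\<xi> + \<epsilon>"] by auto
  then obtain s t :: int where "t > 0" "x = of_int s / of_int t"
    by (auto elim: Rats_cases')
  with \<open>\<xi> < x\<close> \<open>x < \<xi> + \<epsilon>\<close> have "(s, t) \<in> {(s, t). t > 0 \<and> \<bar>of_int s / of_int t - \<xi>\<bar> < \<epsilon>}"
    by simp
  then show "0 \<le> (SUP p\<in>{(s, t). t > 0 \<and> \<bar>of_int s / of_int t - \<xi>\<bar> < \<epsilon>}. lam_term n \<xi> (fst p) (snd p))"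
    by (rule SUP_upper2) (simp add: lam_term_def)
qed

text \<open>For \<open>s/t\<close> near \<open>\<xi>\<close> the second factor \<open>|s - t \<xi>'|\<close> of \<open>mu_term\<close> is about
  \<open>t |\<xi> - \<xi>'|\<close>, so \<open>mu_term\<close> is \<open>lam_term\<close> up to a factor tending to 1.\<close>

lemma lam_term_le_mu_term:
  assumes "t > 0" "\<xi> \<noteq> \<xi>'"
  shows "lam_term n \<xi> s t
    \<le> ereal (1 + \<bar>of_int s / of_int t - \<xi>\<bar> / \<bar>\<xi> - \<xi>'\<bar>) * mu_term n \<xi> \<xi>' s t"
proof -
  define T where "T = real_of_int t"
  define D where "D = \<bar>\<xi> - \<xi>'\<bar>"
  define x where "x = of_int s - T * \<xi>"
  define y where "y = of_int s - T * \<xi>'"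
  define g where "g = real_of_int (gcd t (int n))"
  define f where "f = 1 + \<bar>of_int s / of_int t - \<xi>\<bar> / D"
  have "T > 0" "D > 0" using assms unfolding T_def D_def by simp_all
  then have "f > 0" unfolding f_def by (simp add: add_pos_nonneg)
  have "of_int s / of_int t - \<xi> = x / T"
    using \<open>T > 0\<close> unfolding x_def T_def by (simp add: field_simps)
  with \<open>T > 0\<close> have "(of_int s / of_int t = \<xi>) \<longleftrightarrow> x = 0"
    and "(of_int t)\<^sup>2 * \<bar>of_int s / of_int t - \<xi>\<bar> = T * \<bar>x\<bar>"
    unfolding T_def by (auto simp: abs_div power2_eq_square)
  then have lam: "lam_term n \<xi> s t = (if x = 0 then \<infinity> else ereal (g / (T * \<bar>x\<bar>)))"
    unfolding lam_term_def g_def by simp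
  have mu: "mu_term n \<xi> \<xi>' s t = (if x * y = 0 then \<infinity> else ereal (g * D / (\<bar>x\<bar> * \<bar>y\<bar>)))"
    unfolding mu_term_def Let_def x_def y_def T_def g_def D_def by (simp add: abs_mult)
  have "\<bar>y\<bar> \<le> T * D * f"
  proof -
    have "y = T * ((of_int s / of_int t - \<xi>) + (\<xi> - \<xi>'))"
      using \<open>T > 0\<close> unfolding y_def T_def by (simp add: field_simps)
    then have "\<bar>y\<bar> \<le> T * (\<bar>of_int s / of_int t - \<xi>\<bar> + D)"
      using \<open>T > 0\<close> unfolding D_def by (simp add: abs_mult abs_triangle_ineq)
    moreover have "T * D * f = T * (\<bar>of_int s / of_int t - \<xi>\<bar> + D)"
      using \<open>D > 0\<close> unfolding f_def by (simp add: field_simps)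
    ultimately show ?thesis by linarith
  qed
  have "g / (T * \<bar>x\<bar>) \<le> f * (g * D / (\<bar>x\<bar> * \<bar>y\<bar>))" if "x \<noteq> 0" "y \<noteq> 0"
  proof -
    have "g / (T * \<bar>x\<bar>) = (g * D / (\<bar>x\<bar> * \<bar>y\<bar>)) * (\<bar>y\<bar> / (T * D))"
      using that \<open>T > 0\<close> \<open>D > 0\<close> by (simp add: field_simps)
    also have "\<dots> \<le> (g * D / (\<bar>x\<bar> * \<bar>y\<bar>)) * f"
      using \<open>\<bar>y\<bar> \<le> T * D * f\<close> \<open>T > 0\<close> \<open>D > 0\<close>
      by (intro mult_left_mono) (simp_all add: g_def pos_divide_le_eq mult.commute)
    finally show ?thesis by (simp add: mult.commute)
  qed
  with \<open>f > 0\<close> show ?thesis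
    unfolding lam mu D_def[symmetric] f_def[symmetric] by auto
qed

lemma lambda_n_le_scaled_mu_n:
  assumes "\<xi> \<noteq> \<xi>'" "\<epsilon> > 0"
  shows "lambda_n n \<xi> \<le> ereal (1 + \<epsilon> / \<bar>\<xi> - \<xi>'\<bar>) * mu_n n \<xi> \<xi>'"
proof -
  have "lambda_n n \<xi>
      \<le> (SUP p\<in>{(s, t). t > 0 \<and> \<bar>of_int s / of_int t - \<xi>\<bar> < \<epsilon>}. lam_term n \<xi> (fst p) (snd p))"
    unfolding lambda_n_def using assms(2) by (intro INF_lower) simp
  also have "\<dots> \<le> ereal (1 + \<epsilon> / \<bar>\<xi> - \<xi>'\<bar>) * mu_n n \<xi> \<xi>'"
  proof (rule SUP_least, clarify)
    fix s t :: int assume "t > 0" "\<bar>of_int s / of_int t - \<xi>\<bar> < \<epsilon>"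
    have "lam_term n \<xi> s t
        \<le> ereal (1 + \<bar>of_int s / of_int t - \<xi>\<bar> / \<bar>\<xi> - \<xi>'\<bar>) * mu_term n \<xi> \<xi>' s t"
      using lam_term_le_mu_term[OF \<open>t > 0\<close> assms(1)] .
    also have "\<dots> \<le> ereal (1 + \<epsilon> / \<bar>\<xi> - \<xi>'\<bar>) * mu_n n \<xi> \<xi>'"
      using \<open>t > 0\<close> \<open>\<bar>of_int s / of_int t - \<xi>\<bar> < \<epsilon>\<close> assms
      by (intro ereal_mult_mono)
        (simp_all add: mu_term_le_mu_n mu_term_nonneg add_nonneg_nonneg divide_right_mono)
    finally show "lam_term n \<xi> (fst (s, t)) (snd (s, t)) \<le> ereal (1 + \<epsilon> / \<bar>\<xi> - \<xi>'\<bar>) * mu_n n \<xi> \<xi>'"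
      by simp
  qed
  finally show ?thesis .
qed

lemma lambda_n_le_mu_n:
  assumes "\<xi> \<noteq> \<xi>'"
  shows "lambda_n n \<xi> \<le> mu_n n \<xi> \<xi>'"
proof (cases "mu_n n \<xi> \<xi>'")
  case (real m)
  define D where "D = \<bar>\<xi> - \<xi>'\<bar>"
  have "D > 0" using assms unfolding D_def by simp
  from real mu_n_nonneg[of n \<xi> \<xi>'] have "m \<ge> 0" by simp
  have "lambda_n n \<xi> \<le> ereal m + ereal e" if "e > 0" for e
  proof -
    have "e * D / (m + 1) > 0"
      using \<open>D > 0\<close> \<open>m \<ge> 0\<close> that by simp
    from lambda_n_le_scaled_mu_n[OF assms this, of n] real assms
    have "lambda_n n \<xi> \<le> ereal ((1 + e / (m + 1)) * m)"
      unfolding D_def by simp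
    moreover have "(1 + e / (m + 1)) * m \<le> m + e"
    proof -
      have "(1 + e / (m + 1)) * m = m + e * (m / (m + 1))"
        by (simp add: algebra_simps)
      moreover have "e * (m / (m + 1)) \<le> e"
        using \<open>m \<ge> 0\<close> that by (intro mult_left_le) simp_all
      ultimately show ?thesis by linarith
    qed
    ultimately show ?thesis
      by (simp add: order_trans)
  qed
  then have "lambda_n n \<xi> \<le> ereal m" by (rule ereal_le_epsilon2)
  with real show ?thesis by simp
qed (use mu_n_nonneg[of n \<xi> \<xi>'] in auto)

lemma lambda_n_bound_near:
  assumes "lambda_n n \<xi> = ereal L" "e > 0"
  obtains \<epsilon> where "\<epsilon> > 0" "\<And>s t. t \<noteq> 0 \<Longrightarrow> \<bar>of_int s - of_int t * \<xi>\<bar> < \<epsilon> \<Longrightarrow>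
      form_term n 1 (- \<xi>) 0 1 0 1 s t \<le> ereal (L + e)"
proof -
  from assms have "lambda_n n \<xi> < ereal (L + e)" by simp
  then obtain \<epsilon> where "\<epsilon> > 0" and sup:
    "(SUP p\<in>{(s, t). t > 0 \<and> \<bar>of_int s / of_int t - \<xi>\<bar> < \<epsilon>}. lam_term n \<xi> (fst p) (snd p))
      < ereal (L + e)"
    unfolding lambda_n_def by (auto simp: INF_less_iff)
  have pos: "form_term n 1 (- \<xi>) 0 1 0 1 s t \<le> ereal (L + e)"
    if "t > 0" "\<bar>of_int s - of_int t * \<xi>\<bar> < \<epsilon>" for s t
  proof -
    from \<open>t > 0\<close> have "real_of_int t \<ge> 1" by simp
    then have "\<bar>of_int s / of_int t - \<xi>\<bar> = \<bar>of_int s - of_int t * \<xi>\<bar> / of_int t"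
      by (simp add: field_simps abs_div)
    also have "\<dots> \<le> \<bar>of_int s - of_int t * \<xi>\<bar>"
      using \<open>real_of_int t \<ge> 1\<close> by (simp add: divide_le_eq mult_le_cancel_left1)
    finally have "(s, t) \<in> {(s, t). t > 0 \<and> \<bar>of_int s / of_int t - \<xi>\<bar> < \<epsilon>}"
      using that by simp
    then have "lam_term n \<xi> s t < ereal (L + e)"
      using sup by (metis (no_types, lifting) SUP_lessD fst_conv snd_conv)
    then show ?thesis
      using lam_term_eq_form_term[OF \<open>t > 0\<close>] by simp
  qed
  show thesis
  proof (rule that[OF \<open>\<epsilon> > 0\<close>])
    fix s t :: int assume "t \<noteq> 0" "\<bar>of_int s - of_int t * \<xi>\<bar> < \<epsilon>"
    show "form_term n 1 (- \<xi>) 0 1 0 1 s t \<le> ereal (L + e)"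
    proof (cases "t > 0")
      case True
      then show ?thesis using pos \<open>\<bar>of_int s - of_int t * \<xi>\<bar> < \<epsilon>\<close> by blast
    next
      case False
      with \<open>t \<noteq> 0\<close> have "- t > 0" by simp
      moreover have "\<bar>of_int (- s) - of_int (- t) * \<xi>\<bar> < \<epsilon>"
        using \<open>\<bar>of_int s - of_int t * \<xi>\<bar> < \<epsilon>\<close> by (simp add: abs_minus_commute)
      ultimately have "form_term n 1 (- \<xi>) 0 1 0 1 (- s) (- t) \<le> ereal (L + e)"
        by (rule pos)
      then show ?thesis by (simp only: form_term_uminus)
    qed
  qed
qed

lemma lattice_point_near_line:
  fixes s t :: int and N B \<epsilon> \<xi> :: real
  assumes "(s, t) \<noteq> (0, 0)" "N * \<bar>of_int s - of_int t * \<xi>\<bar> \<le> B" "0 \<le> B" "B < N" "B < N * \<epsilon>"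
  shows "t \<noteq> 0" "\<bar>of_int s - of_int t * \<xi>\<bar> < \<epsilon>"
proof -
  have "N > 0" using assms(3,4) by simp
  have "N * \<bar>of_int s - of_int t * \<xi>\<bar> < N * \<epsilon>"
    using assms(2,5) by linarith
  with \<open>N > 0\<close> show "\<bar>of_int s - of_int t * \<xi>\<bar> < \<epsilon>" by simp
  show "t \<noteq> 0"
  proof
    assume "t = 0"
    with assms(1) have "s \<noteq> 0" by simp
    then have "1 \<le> \<bar>real_of_int s\<bar>" by linarith
    with \<open>N > 0\<close> have "N \<le> N * \<bar>of_int s - of_int t * \<xi>\<bar>"
      using \<open>t = 0\<close> by simp
    with assms(2,4) show False by simp
  qed
qed

lemma abs_linear_form_le:
  fixes a b x y K :: real
  assumes "\<bar>a\<bar> \<le> K" "\<bar>b\<bar> \<le> K"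
  shows "\<bar>a * x + b * y\<bar> \<le> K * (\<bar>x\<bar> + \<bar>y\<bar>)"
proof -
  have "\<bar>a * x + b * y\<bar> \<le> \<bar>a\<bar> * \<bar>x\<bar> + \<bar>b\<bar> * \<bar>y\<bar>"
    by (metis abs_mult abs_triangle_ineq)
  also have "\<dots> \<le> K * \<bar>x\<bar> + K * \<bar>y\<bar>"
    using assms by (intro add_mono mult_right_mono) auto
  finally show ?thesis by (simp add: algebra_simps)
qed

text \<open>The coefficient bounds say \<open>|N (s' - t' \<xi>)| \<le> K (|s| + |t|)\<close> for the image \<open>(s', t')\<close>
  of \<open>(s, t)\<close>, so for large \<open>N\<close> the fraction \<open>s'/t'\<close> is close to \<open>\<xi>\<close>.\<close>

lemma lambda_n_bound_transformed:
  assumes "lambda_n n \<xi> = ereal L" "e > 0" "(s, t) \<noteq> (0, 0)"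
  obtains M :: real where "\<And>N h11 h12 h21 h22. N \<ge> M \<Longrightarrow> h11 * h22 - h12 * h21 = 1 \<Longrightarrow>
      \<bar>N * of_int h11 + - (N * \<xi>) * of_int h21\<bar> \<le> K \<Longrightarrow>
      \<bar>N * of_int h12 + - (N * \<xi>) * of_int h22\<bar> \<le> K \<Longrightarrow>
      form_term n 1 (- \<xi>) 0 1 0 1 (h11 * s + h12 * t) (h21 * s + h22 * t) \<le> ereal (L + e)"
proof -
  obtain \<epsilon> where "\<epsilon> > 0" and near: "\<And>s t. t \<noteq> 0 \<Longrightarrow> \<bar>of_int s - of_int t * \<xi>\<bar> < \<epsilon> \<Longrightarrow>
      form_term n 1 (- \<xi>) 0 1 0 1 s t \<le> ereal (L + e)"
    using lambda_n_bound_near[OF assms(1,2)] by blast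
  define B where "B = K * (\<bar>of_int s\<bar> + \<bar>of_int t\<bar>)"
  show thesis
  proof (rule that[of "B + B / \<epsilon> + 1"])
    fix N :: real and h11 h12 h21 h22 :: int
    assume N: "N \<ge> B + B / \<epsilon> + 1" and H: "h11 * h22 - h12 * h21 = 1"
      and K: "\<bar>N * of_int h11 + - (N * \<xi>) * of_int h21\<bar> \<le> K"
        "\<bar>N * of_int h12 + - (N * \<xi>) * of_int h22\<bar> \<le> K"
    define s' where "s' = h11 * s + h12 * t"
    define t' where "t' = h21 * s + h22 * t"
    have "N * (of_int s' - of_int t' * \<xi>)
        = (N * of_int h11 + - (N * \<xi>) * of_int h21) * of_int s
          + (N * of_int h12 + - (N * \<xi>) * of_int h22) * of_int t"
      unfolding s'_def t'_def by (simp add: algebra_simps)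
    also have "\<bar>\<dots>\<bar> \<le> B"
      using K unfolding B_def by (rule abs_linear_form_le)
    finally have close: "\<bar>N\<bar> * \<bar>of_int s' - of_int t' * \<xi>\<bar> \<le> B"
      by (simp add: abs_mult)
    have "B \<ge> 0"
      using K(1) unfolding B_def by simp
    with \<open>\<epsilon> > 0\<close> have "B / \<epsilon> \<ge> 0" by simp
    with N \<open>B \<ge> 0\<close> have "B < N" "B / \<epsilon> < N" by linarith+
    then have "B < N * \<epsilon>"
      using \<open>\<epsilon> > 0\<close> by (simp add: pos_divide_less_eq)
    with close \<open>B \<ge> 0\<close> \<open>B < N\<close> have "t' \<noteq> 0" "\<bar>of_int s' - of_int t' * \<xi>\<bar> < \<epsilon>"
      using lattice_point_near_line[OF unimodular_image_nonzero[OF H assms(3)]]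
      unfolding s'_def t'_def by (simp_all add: abs_of_nonneg)
    then show "form_term n 1 (- \<xi>) 0 1 0 1 (h11 * s + h12 * t) (h21 * s + h22 * t) \<le> ereal (L + e)"
      using near unfolding s'_def t'_def by blast
  qed
qed

lemma lambda_n_product_lower_bound:
  assumes "n > 0" "lambda_n n \<xi> = ereal L"
  obtains \<epsilon> where "\<epsilon> > 0" "\<And>h q. q \<noteq> 0 \<Longrightarrow> \<bar>of_int h - of_int q * \<xi>\<bar> < \<epsilon> \<Longrightarrow>
      1 \<le> (\<bar>L\<bar> + 1) * \<bar>(of_int h - of_int q * \<xi>) * of_int q\<bar>"
proof -
  obtain \<epsilon> where "\<epsilon> > 0" and near: "\<And>s t. t \<noteq> 0 \<Longrightarrow> \<bar>of_int s - of_int t * \<xi>\<bar> < \<epsilon> \<Longrightarrow>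
      form_term n 1 (- \<xi>) 0 1 0 1 s t \<le> ereal (L + 1)"
    using lambda_n_bound_near[OF assms(2), of 1] by auto
  show thesis
  proof (rule that[OF \<open>\<epsilon> > 0\<close>])
    fix h q :: int assume "q \<noteq> 0" "\<bar>of_int h - of_int q * \<xi>\<bar> < \<epsilon>"
    from near[OF this] have "form_term n 1 (- \<xi>) 0 1 0 1 h q \<le> ereal (L + 1)" .
    define z where "z = \<bar>(of_int h - of_int q * \<xi>) * of_int q\<bar>"
    from form_value_lower_bound(2)[OF \<open>form_term n 1 (- \<xi>) 0 1 0 1 h q \<le> ereal (L + 1)\<close> \<open>n > 0\<close>]
    have "1 \<le> (L + 1) * z"
      unfolding z_def by (simp add: algebra_simps)
    moreover have "(L + 1) * z \<le> (\<bar>L\<bar> + 1) * z"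
      unfolding z_def by (rule mult_right_mono) simp_all
    ultimately show "1 \<le> (\<bar>L\<bar> + 1) * z" by linarith
  qed
qed

text \<open>Reduction of the forms \<open>Ns - N\<xi>t\<close> and \<open>t/N\<close>, whose product \<open>(s - t\<xi>) t\<close> does not
  depend on \<open>N\<close>.\<close>

lemma exists_reduced_basis_line:
  fixes N :: nat
  assumes "N > 0" "R > 0"
    and lower: "\<And>h q. q \<noteq> 0 \<Longrightarrow> \<bar>of_int h - of_int q * \<xi>\<bar> < 1 / real N \<Longrightarrow>
      1 \<le> R * \<bar>(of_int h - of_int q * \<xi>) * of_int q\<bar>"
  obtains h11 h12 h21 h22 :: int where "h11 * h22 - h12 * h21 = 1"
    "\<bar>real N * of_int h11 + - (real N * \<xi>) * of_int h21\<bar> \<le> sqrt (5 + R / 2)"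
    "\<bar>real N * of_int h12 + - (real N * \<xi>) * of_int h22\<bar> \<le> sqrt (5 + R / 2)"
    "\<bar>0 * of_int h11 + 1 / real N * of_int h21\<bar> \<le> sqrt (5 + R / 2)"
    "\<bar>0 * of_int h12 + 1 / real N * of_int h22\<bar> \<le> sqrt (5 + R / 2)"
proof -
  have lower': "1 / R \<le> \<bar>(real N * of_int h + - (real N * \<xi>) * of_int q) *
      (0 * of_int h + 1 / real N * of_int q)\<bar>"
    if "coprime h q" "0 < q" "\<bar>of_int h - of_int q * \<xi>\<bar> < 1 / real N" for h q
  proof -
    have "(real N * of_int h + - (real N * \<xi>) * of_int q) * (0 * of_int h + 1 / real N * of_int q)
        = (of_int h - of_int q * \<xi>) * of_int q"
      using \<open>N > 0\<close> by (simp add: field_simps)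
    moreover have "q \<noteq> 0" using that(2) by simp
    ultimately show ?thesis
      using lower[OF _ that(3)] \<open>R > 0\<close> by (simp add: divide_le_eq mult.commute)
  qed
  have det: "real N * (1 / real N) - - (real N * \<xi>) * 0 = 1"
    and pos: "\<bar>0\<bar> \<le> real N" "1 / R > 0"
    using \<open>N > 0\<close> \<open>R > 0\<close> by simp_all
  have K: "5 + 1 / (2 * (1 / R)) = 5 + R / 2" by simp
  obtain h11 h12 h21 h22 where "h11 * h22 - h12 * h21 = 1"
    "\<bar>real N * of_int h11 + - (real N * \<xi>) * of_int h21\<bar> \<le> sqrt (5 + 1 / (2 * (1 / R)))"
    "\<bar>real N * of_int h12 + - (real N * \<xi>) * of_int h22\<bar> \<le> sqrt (5 + 1 / (2 * (1 / R)))"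
    "\<bar>0 * of_int h11 + 1 / real N * of_int h21\<bar> \<le> sqrt (5 + 1 / (2 * (1 / R)))"
    "\<bar>0 * of_int h12 + 1 / real N * of_int h22\<bar> \<le> sqrt (5 + 1 / (2 * (1 / R)))"
    by (rule exists_reduced_basis[OF \<open>N > 0\<close> refl refl det pos lower'])
  then show thesis
    unfolding K by (rule that)
qed

lemma lambda_n_reduced_bases:
  assumes "n > 0" "lambda_n n \<xi> = ereal L"
  obtains N :: "nat \<Rightarrow> real" and H11 H12 H21 H22 :: "nat \<Rightarrow> int"
  where "\<And>k. N k > 0" "\<And>k. real k \<le> N k" "\<And>k. H11 k * H22 k - H12 k * H21 k = 1"
    "\<And>k. \<bar>N k * of_int (H11 k) + - (N k * \<xi>) * of_int (H21 k)\<bar> \<le> sqrt (5 + (\<bar>L\<bar> + 1) / 2) \<and>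
      \<bar>N k * of_int (H12 k) + - (N k * \<xi>) * of_int (H22 k)\<bar> \<le> sqrt (5 + (\<bar>L\<bar> + 1) / 2) \<and>
      \<bar>0 * of_int (H11 k) + 1 / N k * of_int (H21 k)\<bar> \<le> sqrt (5 + (\<bar>L\<bar> + 1) / 2) \<and>
      \<bar>0 * of_int (H12 k) + 1 / N k * of_int (H22 k)\<bar> \<le> sqrt (5 + (\<bar>L\<bar> + 1) / 2)"
proof -
  obtain \<epsilon> where "\<epsilon> > 0" and lower: "\<And>h q. q \<noteq> 0 \<Longrightarrow> \<bar>of_int h - of_int q * \<xi>\<bar> < \<epsilon> \<Longrightarrow>
      1 \<le> (\<bar>L\<bar> + 1) * \<bar>(of_int h - of_int q * \<xi>) * of_int q\<bar>"
    using lambda_n_product_lower_bound[OF assms] by blast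
  define M :: "nat \<Rightarrow> nat" where "M k = k + nat \<lceil>1 / \<epsilon>\<rceil> + 1" for k
  have "M k > 0" for k unfolding M_def by simp
  have "1 / \<epsilon> < real (M k)" for k unfolding M_def by linarith
  with \<open>\<epsilon> > 0\<close> have "1 / real (M k) < \<epsilon>" for k
    by (simp add: divide_less_eq mult.commute)
  then have "\<exists>h11 h12 h21 h22. h11 * h22 - h12 * h21 = 1 \<and>
      \<bar>real (M k) * of_int h11 + - (real (M k) * \<xi>) * of_int h21\<bar> \<le> sqrt (5 + (\<bar>L\<bar> + 1) / 2) \<and>
      \<bar>real (M k) * of_int h12 + - (real (M k) * \<xi>) * of_int h22\<bar> \<le> sqrt (5 + (\<bar>L\<bar> + 1) / 2) \<and>
      \<bar>0 * of_int h11 + 1 / real (M k) * of_int h21\<bar> \<le> sqrt (5 + (\<bar>L\<bar> + 1) / 2) \<and>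
      \<bar>0 * of_int h12 + 1 / real (M k) * of_int h22\<bar> \<le> sqrt (5 + (\<bar>L\<bar> + 1) / 2)" for k
  proof -
    have lower_k: "1 \<le> (\<bar>L\<bar> + 1) * \<bar>(of_int h - of_int q * \<xi>) * of_int q\<bar>"
      if "q \<noteq> 0" "\<bar>of_int h - of_int q * \<xi>\<bar> < 1 / real (M k)" for h q
      by (rule lower[OF that(1) less_trans[OF that(2) \<open>1 / real (M k) < \<epsilon>\<close>]])
    have "0 < \<bar>L\<bar> + 1" by simp
    obtain h11 h12 h21 h22 where "h11 * h22 - h12 * h21 = 1"
      "\<bar>real (M k) * of_int h11 + - (real (M k) * \<xi>) * of_int h21\<bar> \<le> sqrt (5 + (\<bar>L\<bar> + 1) / 2)"
      "\<bar>real (M k) * of_int h12 + - (real (M k) * \<xi>) * of_int h22\<bar> \<le> sqrt (5 + (\<bar>L\<bar> + 1) / 2)"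
      "\<bar>0 * of_int h11 + 1 / real (M k) * of_int h21\<bar> \<le> sqrt (5 + (\<bar>L\<bar> + 1) / 2)"
      "\<bar>0 * of_int h12 + 1 / real (M k) * of_int h22\<bar> \<le> sqrt (5 + (\<bar>L\<bar> + 1) / 2)"
      by (rule exists_reduced_basis_line[OF \<open>M k > 0\<close> \<open>0 < \<bar>L\<bar> + 1\<close> lower_k])
    then show ?thesis by blast
  qed
  then obtain H11 H12 H21 H22 where "\<And>k. H11 k * H22 k - H12 k * H21 k = 1 \<and>
      \<bar>real (M k) * of_int (H11 k) + - (real (M k) * \<xi>) * of_int (H21 k)\<bar> \<le> sqrt (5 + (\<bar>L\<bar> + 1) / 2) \<and>
      \<bar>real (M k) * of_int (H12 k) + - (real (M k) * \<xi>) * of_int (H22 k)\<bar> \<le> sqrt (5 + (\<bar>L\<bar> + 1) / 2) \<and>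
      \<bar>0 * of_int (H11 k) + 1 / real (M k) * of_int (H21 k)\<bar> \<le> sqrt (5 + (\<bar>L\<bar> + 1) / 2) \<and>
      \<bar>0 * of_int (H12 k) + 1 / real (M k) * of_int (H22 k)\<bar> \<le> sqrt (5 + (\<bar>L\<bar> + 1) / 2)"
    by metis
  with \<open>\<And>k. M k > 0\<close> show thesis
    by (intro that[of "\<lambda>k. real (M k)"]) (auto simp: M_def)
qed

lemma exists_pair_mu_n_le_lambda_n:
  assumes "n > 0" and lambda: "lambda_n n \<xi> = ereal L"
  obtains \<eta> \<eta>' where "\<eta> \<noteq> \<eta>'" "mu_n n \<eta> \<eta>' \<le> ereal L"
proof -
  define K where "K = sqrt (5 + (\<bar>L\<bar> + 1) / 2)"
  obtain N H11 H12 H21 H22 where N: "\<And>k. N k > 0" "\<And>k. real k \<le> N k"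
    and H: "\<And>k. H11 k * H22 k - H12 k * H21 k = 1"
    and bounds: "\<And>k. \<bar>N k * of_int (H11 k) + - (N k * \<xi>) * of_int (H21 k)\<bar> \<le> K \<and>
      \<bar>N k * of_int (H12 k) + - (N k * \<xi>) * of_int (H22 k)\<bar> \<le> K \<and>
      \<bar>0 * of_int (H11 k) + 1 / N k * of_int (H21 k)\<bar> \<le> K \<and>
      \<bar>0 * of_int (H12 k) + 1 / N k * of_int (H22 k)\<bar> \<le> K"
    using lambda_n_reduced_bases[OF assms] unfolding K_def by metis
  define A where "A k = N k * of_int (H11 k) + - (N k * \<xi>) * of_int (H21 k)" for k
  define B where "B k = N k * of_int (H12 k) + - (N k * \<xi>) * of_int (H22 k)" for k
  define C where "C k = 0 * of_int (H11 k) + 1 / N k * of_int (H21 k)" for k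
  define D where "D k = 0 * of_int (H12 k) + 1 / N k * of_int (H22 k)" for k
  have "N k \<noteq> 0" for k using N(1)[of k] by simp
  then have transformed: "form_term n (A k) (B k) (C k) (D k) (H21 k) (H22 k) s t
      = form_term n 1 (- \<xi>) 0 1 0 1 (H11 k * s + H12 k * t) (H21 k * s + H22 k * t)" for k s t
    using form_term_unimodular[OF H[of k], where a = "N k" and b = "- (N k * \<xi>)" and c = 0
        and d = "1 / N k" and p = 0 and q = 1]
      form_term_lambda_scale unfolding A_def B_def C_def D_def by simp
  show thesis
  proof (rule exists_pair_of_bounded_forms[OF \<open>n > 0\<close>, of A D B C K H21 H22 L])
    show "A k * D k - B k * C k = 1" for k
      using det_unimodular_transform[of "N k" "H11 k" "- (N k * \<xi>)" "H21 k" 0 "H12 k" "1 / N k" "H22 k"]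
        H[of k] \<open>N k \<noteq> 0\<close> unfolding A_def B_def C_def D_def by simp
    show "\<bar>A k\<bar> \<le> K \<and> \<bar>B k\<bar> \<le> K \<and> \<bar>C k\<bar> \<le> K \<and> \<bar>D k\<bar> \<le> K" for k
      using bounds[of k] unfolding A_def B_def C_def D_def by blast
    show "coprime (H21 k) (H22 k)" for k
      using H[of k] by (rule unimodular_imp_coprime)
  next
    fix s t :: int and e :: real
    assume "(s, t) \<noteq> (0, 0)" "e > 0"
    with lambda_n_bound_transformed[OF lambda] obtain M where M: "\<And>N h11 h12 h21 h22. N \<ge> M \<Longrightarrow>
        h11 * h22 - h12 * h21 = 1 \<Longrightarrow> \<bar>N * of_int h11 + - (N * \<xi>) * of_int h21\<bar> \<le> K \<Longrightarrow>
        \<bar>N * of_int h12 + - (N * \<xi>) * of_int h22\<bar> \<le> K \<Longrightarrow>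
        form_term n 1 (- \<xi>) 0 1 0 1 (h11 * s + h12 * t) (h21 * s + h22 * t) \<le> ereal (L + e)"
      by metis
    have "N k \<ge> M" if "k \<ge> nat \<lceil>M\<rceil>" for k
      using that N(2)[of k] by linarith
    then show "eventually (\<lambda>k. form_term n (A k) (B k) (C k) (D k) (H21 k) (H22 k) s t \<le> ereal (L + e))
        sequentially"
      unfolding eventually_sequentially transformed using M H bounds by blast
  qed (rule that)
qed

section \<open>The infimum of \<open>M_n\<close>\<close>

lemma mu_n_finite_imp_irrational:
  assumes "mu_n n \<xi> \<xi>' \<le> ereal C"
  shows "\<xi> \<notin> \<rat>"
proof
  assume "\<xi> \<in> \<rat>"
  then obtain s t :: int where "t > 0" "\<xi> = of_int s / of_int t"
    by (auto elim: Rats_cases')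
  then have "mu_term n \<xi> \<xi>' s t = \<infinity>"
    unfolding mu_term_def Let_def by simp
  moreover have "mu_term n \<xi> \<xi>' s t \<le> mu_n n \<xi> \<xi>'"
    using \<open>t > 0\<close> by (intro mu_term_le_mu_n) simp
  ultimately show False
    using assms by simp
qed

lemma golden_norm_eq_0_imp_zero:
  fixes s t :: int
  shows "s * s - s * t - t * t = 0 \<Longrightarrow> s = 0 \<and> t = 0"
proof (induction "nat (\<bar>s\<bar> + \<bar>t\<bar>)" arbitrary: s t rule: less_induct)
  case less
  have "even s \<and> even t"
  proof (rule ccontr)
    assume "\<not> (even s \<and> even t)"
    then have "odd (s * s - s * t - t * t)" by auto
    with less.prems show False by simp
  qed
  then obtain s' t' where st: "s = 2 * s'" "t = 2 * t'" by (auto elim!: evenE)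
  show ?case
  proof (cases "s = 0 \<and> t = 0")
    case False
    then have "nat (\<bar>s'\<bar> + \<bar>t'\<bar>) < nat (\<bar>s\<bar> + \<bar>t\<bar>)" unfolding st by auto
    moreover have "s' * s' - s' * t' - t' * t' = 0"
      using less.prems unfolding st by (simp add: algebra_simps)
    ultimately have "s' = 0 \<and> t' = 0" by (rule less.hyps)
    with st show ?thesis by simp
  qed simp
qed

lemma mu_n_golden_ratio:
  assumes "n > 0"
  shows "mu_n n ((1 + sqrt 5) / 2) ((1 - sqrt 5) / 2) \<le> ereal (real n * sqrt 5)"
proof -
  define \<phi> :: real where "\<phi> = (1 + sqrt 5) / 2"
  define \<psi> :: real where "\<psi> = (1 - sqrt 5) / 2"
  have "mu_term n \<phi> \<psi> s t \<le> ereal (real n * sqrt 5)" if "(s, t) \<noteq> (0, 0)" for s t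
  proof -
    define z where "z = s * s - s * t - t * t"
    have "(of_int s - of_int t * \<phi>) * (of_int s - of_int t * \<psi>) = of_int z"
      unfolding z_def \<phi>_def \<psi>_def
      by (simp add: algebra_simps power2_eq_square) (simp add: field_simps)
    then have prod: "\<bar>of_int s - of_int t * \<phi>\<bar> * \<bar>of_int s - of_int t * \<psi>\<bar> = \<bar>of_int z\<bar>"
      by (metis abs_mult)
    have "z \<noteq> 0"
      using golden_norm_eq_0_imp_zero that unfolding z_def by blast
    then have "1 \<le> \<bar>real_of_int z\<bar>" by linarith
    have "gcd t (int n) \<le> int n"
      using assms by (intro gcd_le2_int) simp
    then have "real_of_int (gcd t (int n)) * sqrt 5 / \<bar>of_int z\<bar> \<le> real n * sqrt 5 / 1"
      using \<open>1 \<le> \<bar>real_of_int z\<bar>\<close> by (intro frac_le mult_right_mono) simp_all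
    moreover have "\<bar>\<phi> - \<psi>\<bar> = sqrt 5"
      unfolding \<phi>_def \<psi>_def by (simp add: field_simps)
    ultimately show ?thesis
      using \<open>z \<noteq> 0\<close> unfolding mu_term_def Let_def prod by simp
  qed
  then have "mu_n n \<phi> \<psi> \<le> ereal (real n * sqrt 5)"
    unfolding mu_n_le_iff by blast
  then show ?thesis
    unfolding \<phi>_def \<psi>_def .
qed

lemma mu_n_scaled_form:
  assumes "\<xi> \<noteq> \<xi>'" "mu_n n \<xi> \<xi>' \<le> ereal x"
  obtains N :: nat and c d :: real where "N > 0" "real N * d - - (real N * \<xi>) * c = 1"
    "\<bar>c\<bar> \<le> real N" "form_bounded n (real N) (- (real N * \<xi>)) c d 0 1 x"
proof -
  define \<delta> where "\<delta> = \<xi> - \<xi>'"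
  have "\<delta> \<noteq> 0" using assms(1) unfolding \<delta>_def by simp
  define N :: nat where "N = nat \<lceil>1 / \<bar>\<delta>\<bar>\<rceil> + 1"
  have "N > 0" unfolding N_def by simp
  have "of_int \<lceil>1 / \<bar>\<delta>\<bar>\<rceil> \<le> real N" unfolding N_def by simp
  with le_of_int_ceiling[of "1 / \<bar>\<delta>\<bar>"] have "1 / \<bar>\<delta>\<bar> \<le> real N" by linarith
  with \<open>\<delta> \<noteq> 0\<close> have "real N * \<bar>\<delta>\<bar> \<ge> 1"
    by (simp add: divide_le_eq)
  define c where "c = 1 / (real N * \<delta>)"
  define d where "d = - (\<xi>' / (real N * \<delta>))"
  show thesis
  proof (rule that[OF \<open>N > 0\<close>])
    have "real N * d - - (real N * \<xi>) * c = (\<xi> - \<xi>') / \<delta>"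
      using \<open>N > 0\<close> \<open>\<delta> \<noteq> 0\<close> unfolding c_def d_def by (simp add: field_simps)
    with \<open>\<delta> \<noteq> 0\<close> show "real N * d - - (real N * \<xi>) * c = 1"
      unfolding \<delta>_def by simp
    have "\<bar>c\<bar> = 1 / (real N * \<bar>\<delta>\<bar>)" unfolding c_def by (simp add: abs_mult)
    also have "\<dots> \<le> 1" using \<open>real N * \<bar>\<delta>\<bar> \<ge> 1\<close> by simp
    also have "1 \<le> real N" using \<open>N > 0\<close> by simp
    finally show "\<bar>c\<bar> \<le> real N" .
    have "form_term n (real N) (- (real N * \<xi>)) c d 0 1 s t = form_term n 1 (- \<xi>) 1 (- \<xi>') 0 1 s t"
      for s t
      using form_term_scale[of "real N" "1 / (real N * \<delta>)" n 1 "- \<xi>" 1 "- \<xi>'" 0 1 s t]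
        \<open>N > 0\<close> \<open>\<delta> \<noteq> 0\<close> unfolding c_def d_def by simp
    with assms(2) show "form_bounded n (real N) (- (real N * \<xi>)) c d 0 1 x"
      unfolding mu_n_le_iff_form_bounded form_bounded_def by simp
  qed
qed

lemma form_bounded_value_lower_bound:
  assumes "form_bounded n a b c d p q x" "n > 0" "\<bar>a * d - b * c\<bar> = 1" "x \<le> R" "(h, k) \<noteq> (0, 0)"
  shows "R > 0" "1 / R \<le> \<bar>(a * of_int h + b * of_int k) * (c * of_int h + d * of_int k)\<bar>"
proof -
  define z where "z = \<bar>(a * of_int h + b * of_int k) * (c * of_int h + d * of_int k)\<bar>"
  from assms(1,5) have "form_term n a b c d p q h k \<le> ereal x"
    unfolding form_bounded_def by blast
  from form_value_lower_bound(2)[OF this assms(2,3)] have "1 \<le> x * z"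
    unfolding z_def .
  moreover have "x * z \<le> R * z"
    using assms(4) unfolding z_def by (rule mult_right_mono) simp
  ultimately have "1 \<le> R * z" by linarith
  moreover have "z \<ge> 0" unfolding z_def by simp
  ultimately show "R > 0"
    by (auto simp: zero_less_mult_iff dest: order_less_le_trans[OF zero_less_one])
  with \<open>1 \<le> R * z\<close> show "1 / R \<le> z"
    by (simp add: pos_divide_le_eq mult.commute)
qed

lemma mu_n_reduced_form:
  assumes "n > 0" "\<xi> \<noteq> \<xi>'" "mu_n n \<xi> \<xi>' \<le> ereal x" "x \<le> R"
  obtains a b c d p q where "a * d - b * c = 1"
    "\<bar>a\<bar> \<le> sqrt (5 + R / 2) \<and> \<bar>b\<bar> \<le> sqrt (5 + R / 2) \<and> \<bar>c\<bar> \<le> sqrt (5 + R / 2) \<and> \<bar>d\<bar> \<le> sqrt (5 + R / 2)"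
    "coprime p q" "form_bounded n a b c d p q x"
proof -
  obtain N c d where "N > 0" and det: "real N * d - - (real N * \<xi>) * c = 1"
    and "\<bar>c\<bar> \<le> real N" and bounded: "form_bounded n (real N) (- (real N * \<xi>)) c d 0 1 x"
    using mu_n_scaled_form[OF assms(2,3)] by blast
  note lower = form_bounded_value_lower_bound[OF bounded \<open>n > 0\<close> _ assms(4)]
  from lower[of 1 0] det have "R > 0" by simp
  have "1 / R \<le> \<bar>(real N * of_int h + - (real N * \<xi>) * of_int k) * (c * of_int h + d * of_int k)\<bar>"
    if "coprime h k" "0 < k" for h k
    using lower(2)[of h k] det that by simp
  moreover have "1 / R > 0" "5 + 1 / (2 * (1 / R)) = 5 + R / 2" using \<open>R > 0\<close> by simp_all
  ultimately obtain h11 h12 h21 h22 where H: "h11 * h22 - h12 * h21 = 1"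
    "\<bar>real N * of_int h11 + - (real N * \<xi>) * of_int h21\<bar> \<le> sqrt (5 + R / 2)"
    "\<bar>real N * of_int h12 + - (real N * \<xi>) * of_int h22\<bar> \<le> sqrt (5 + R / 2)"
    "\<bar>c * of_int h11 + d * of_int h21\<bar> \<le> sqrt (5 + R / 2)"
    "\<bar>c * of_int h12 + d * of_int h22\<bar> \<le> sqrt (5 + R / 2)"
    using exists_reduced_basis[OF \<open>N > 0\<close> refl refl det \<open>\<bar>c\<bar> \<le> real N\<close>, of "1 / R"] by metis
  show thesis
  proof (rule that)
    show "(real N * of_int h11 + - (real N * \<xi>) * of_int h21) * (c * of_int h12 + d * of_int h22)
        - (real N * of_int h12 + - (real N * \<xi>) * of_int h22) * (c * of_int h11 + d * of_int h21) = 1"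
      using det H(1) det_unimodular_transform[of "real N" h11 "- (real N * \<xi>)" h21 c h12 d h22]
      by simp
    show "coprime (0 * h11 + 1 * h21) (0 * h12 + 1 * h22)"
      using unimodular_imp_coprime[OF H(1)] by simp
  qed (use H form_bounded_unimodular[OF H(1) bounded] in auto)
qed

lemma mu_n_limit_attained:
  assumes "n > 0"
    and approx: "\<And>k::nat. \<exists>\<xi> \<xi>'. \<xi> \<noteq> \<xi>' \<and> mu_n n \<xi> \<xi>' \<le> ereal (m + 1 / (real k + 1))"
  obtains \<xi> \<xi>' where "\<xi> \<noteq> \<xi>'" "mu_n n \<xi> \<xi>' \<le> ereal m"
proof -
  define R where "R = \<bar>m\<bar> + 1"
  define K where "K = sqrt (5 + R / 2)"
  have "\<exists>a b c d p q. a * d - b * c = 1 \<and> (\<bar>a\<bar> \<le> K \<and> \<bar>b\<bar> \<le> K \<and> \<bar>c\<bar> \<le> K \<and> \<bar>d\<bar> \<le> K) \<and>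
      coprime p q \<and> form_bounded n a b c d p q (m + 1 / (real k + 1))" for k
  proof -
    obtain \<xi> \<xi>' where "\<xi> \<noteq> \<xi>'" "mu_n n \<xi> \<xi>' \<le> ereal (m + 1 / (real k + 1))"
      using approx by blast
    moreover have "1 / (real k + 1) \<le> 1" by simp
    then have "m + 1 / (real k + 1) \<le> R"
      unfolding R_def by linarith
    ultimately obtain a b c d p q where "a * d - b * c = 1"
      "\<bar>a\<bar> \<le> K \<and> \<bar>b\<bar> \<le> K \<and> \<bar>c\<bar> \<le> K \<and> \<bar>d\<bar> \<le> K"
      "coprime p q" "form_bounded n a b c d p q (m + 1 / (real k + 1))"
      unfolding K_def by (rule mu_n_reduced_form[OF \<open>n > 0\<close>])
    then show ?thesis by blast
  qed
  then obtain A B C D P Q where forms: "\<And>k. A k * D k - B k * C k = 1 \<and>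
      (\<bar>A k\<bar> \<le> K \<and> \<bar>B k\<bar> \<le> K \<and> \<bar>C k\<bar> \<le> K \<and> \<bar>D k\<bar> \<le> K) \<and> coprime (P k) (Q k) \<and>
      form_bounded n (A k) (B k) (C k) (D k) (P k) (Q k) (m + 1 / (real k + 1))"
    by metis
  show thesis
  proof (rule exists_pair_of_bounded_forms[OF \<open>n > 0\<close>, of A D B C K P Q m])
    fix s t :: int and e :: real
    assume "(s, t) \<noteq> (0, 0)" "e > 0"
    show "eventually (\<lambda>k. form_term n (A k) (B k) (C k) (D k) (P k) (Q k) s t \<le> ereal (m + e))
        sequentially"
      unfolding eventually_sequentially
    proof (intro exI allI impI)
      fix k assume "k \<ge> nat \<lceil>1 / e\<rceil>"
      then have "1 / e < real k + 1" by linarith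
      with \<open>e > 0\<close> have "1 / (real k + 1) < e"
        by (simp add: divide_less_eq mult.commute)
      moreover have "form_term n (A k) (B k) (C k) (D k) (P k) (Q k) s t \<le> ereal (m + 1 / (real k + 1))"
        using forms[of k] \<open>(s, t) \<noteq> (0, 0)\<close> unfolding form_bounded_def by blast
      ultimately show "form_term n (A k) (B k) (C k) (D k) (P k) (Q k) s t \<le> ereal (m + e)"
        by (simp add: order_trans)
    qed
  qed (use forms that in auto)
qed

lemma M_set_nonneg:
  assumes "x \<in> M_set n"
  shows "x \<ge> 0"
proof -
  from assms obtain \<xi> \<xi>' where "mu_n n \<xi> \<xi>' = ereal x"
    unfolding M_set_def by blast
  with mu_n_nonneg[of n \<xi> \<xi>'] show ?thesis by simp
qed

lemma bdd_below_M_set: "bdd_below (M_set n)"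
  using M_set_nonneg by (intro bdd_belowI) blast

lemma mu_n_le_imp_M_set:
  assumes "\<xi> \<noteq> \<xi>'" "mu_n n \<xi> \<xi>' \<le> ereal C"
  obtains y where "y \<in> M_set n" "y \<le> C" "mu_n n \<xi> \<xi>' = ereal y"
proof -
  from assms(2) mu_n_nonneg[of n \<xi> \<xi>'] obtain y where "mu_n n \<xi> \<xi>' = ereal y"
    by (cases "mu_n n \<xi> \<xi>'") auto
  with assms show thesis
    by (intro that) (auto simp: M_set_def)
qed

lemma Inf_M_set_attained:
  assumes "n > 0"
  obtains \<xi> \<xi>' where "\<xi> \<noteq> \<xi>'" "mu_n n \<xi> \<xi>' = ereal (Inf (M_set n))"
proof -
  define m where "m = Inf (M_set n)"
  have "(1 + sqrt 5) / 2 \<noteq> (1 - sqrt 5) / (2 :: real)" by simp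
  with mu_n_golden_ratio[OF assms] have "M_set n \<noteq> {}"
    by (metis empty_iff mu_n_le_imp_M_set)
  have "\<exists>\<xi> \<xi>'. \<xi> \<noteq> \<xi>' \<and> mu_n n \<xi> \<xi>' \<le> ereal (m + 1 / (real k + 1))" for k :: nat
  proof -
    obtain x where "x \<in> M_set n" "x < m + 1 / (real k + 1)"
      using cInf_lessD[OF \<open>M_set n \<noteq> {}\<close>, of "m + 1 / (real k + 1)"] unfolding m_def by auto
    then show ?thesis unfolding M_set_def by force
  qed
  with mu_n_limit_attained[OF assms] obtain \<xi> \<xi>' where "\<xi> \<noteq> \<xi>'" "mu_n n \<xi> \<xi>' \<le> ereal m"
    by metis
  then obtain y where "y \<in> M_set n" "y \<le> m" "mu_n n \<xi> \<xi>' = ereal y"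
    by (rule mu_n_le_imp_M_set)
  moreover have "m \<le> y"
    unfolding m_def using \<open>y \<in> M_set n\<close> bdd_below_M_set by (rule cInf_lower)
  ultimately show thesis
    using \<open>\<xi> \<noteq> \<xi>'\<close> that unfolding m_def by simp
qed

lemma Inf_M_set_le_L_set:
  assumes "n > 0" "x \<in> L_set n"
  shows "Inf (M_set n) \<le> x"
proof -
  from assms(2) obtain \<xi> where "lambda_n n \<xi> = ereal x"
    unfolding L_set_def by blast
  then obtain \<eta> \<eta>' where "\<eta> \<noteq> \<eta>'" "mu_n n \<eta> \<eta>' \<le> ereal x"
    using exists_pair_mu_n_le_lambda_n[OF assms(1)] by metis
  then obtain y where "y \<in> M_set n" "y \<le> x"
    by (rule mu_n_le_imp_M_set)
  then show ?thesis
    using cInf_lower[OF _ bdd_below_M_set] by (meson order_trans)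
qed

theorem proposition3p7:
  fixes n :: nat
  assumes "n > 0"
  shows "\<exists>m. m \<in> L_set n \<and> (\<forall>x\<in>L_set n. m \<le> x) \<and>
             m \<in> M_set n \<and> (\<forall>x\<in>M_set n. m \<le> x)"
proof -
  define m where "m = Inf (M_set n)"
  obtain \<xi> \<xi>' where "\<xi> \<noteq> \<xi>'" and mu: "mu_n n \<xi> \<xi>' = ereal m"
    using Inf_M_set_attained[OF assms] unfolding m_def by blast
  then have "m \<in> M_set n" unfolding M_set_def by blast
  have M_lower: "\<forall>x\<in>M_set n. m \<le> x"
    unfolding m_def using cInf_lower[OF _ bdd_below_M_set] by blast
  have L_lower: "\<forall>x\<in>L_set n. m \<le> x"
    unfolding m_def using Inf_M_set_le_L_set[OF assms] by blast
  have "lambda_n n \<xi> \<le> ereal m"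
    using lambda_n_le_mu_n[OF \<open>\<xi> \<noteq> \<xi>'\<close>, of n] mu by simp
  with lambda_n_nonneg[of n \<xi>] obtain l where l: "lambda_n n \<xi> = ereal l" "l \<le> m"
    by (cases "lambda_n n \<xi>") auto
  moreover have "\<xi> \<notin> \<rat>"
    using mu by (intro mu_n_finite_imp_irrational[of n \<xi> \<xi>' m]) simp
  ultimately have "l \<in> L_set n"
    unfolding L_set_def by blast
  with L_lower l have "m \<in> L_set n"
    by (metis antisym)
  with \<open>m \<in> M_set n\<close> M_lower L_lower show ?thesis by blast
qed

end
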